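(* Let $g:\mathbb{R}\to\mathbb{R}$ be even and $\pi$-periodic. Let $m,n$ be positive integers, $p=\gcd(m,n)$, $r=n/p$, $\mu=\pi/n$, and $h(x)=\prod_{j=0}^{r-1} g(x+jm\mu)$. For $l\in\{0,\dots,p-1\}$ let $\lambda_l(x)=\prod_{k=1}^{p-l} h\big(x+(k-1)\mu\big)$ and $\delta_l=(p-l-1)\mu$. Then for all $x\in\mathbb{R}$, $$\lambda_l(x-\delta_l)=h\big(x-(p-l-1)\mu\big)\,h\big(x-(p-l-2)\mu\big)\cdots h(x)\quad\text{and}\quad\lambda_l(x-\delta_l)=\lambda_l(-x).$$ *)

theory Defs
  imports "HOL-Analysis.Analysis"
begin

end

theory Submission
  imports Defs
begin

text \<open>The factors of \<open>h\<close> are \<open>g\<close> sampled along the orbit \<open>y, y + m\<mu>, \<dots>, y + (r-1)m\<mu>\<close>,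
  and \<open>r\<close> steps of length \<open>m\<mu>\<close> add up to \<open>(m/p)\<pi>\<close>, a multiple of the period.  Hence
  reflecting the orbit at \<open>0\<close> (evenness of \<open>g\<close>) and translating it by a full turn
  (periodicity) permutes its factors cyclically, so \<open>h\<close> is even.  Both identities
  for \<open>\<lambda>\<^sub>l\<close> are then reindexings of a window of \<open>p - l\<close> consecutive
  translates of \<open>h\<close>, the second one using the evenness of \<open>h\<close>.\<close>

lemma periodic_add_nat_mult:
  fixes g :: "real \<Rightarrow> 'a"
  assumes periodic: "\<And>y. g (y + T) = g y"
  shows "g (y + real k * T) = g y"
proof (induction k arbitrary: y)
  case 0
  then show ?case by simp
next
  case (Suc k)
  have "g (y + real (Suc k) * T) = g ((y + real k * T) + T)"
    by (simp add: algebra_simps)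
  also have "\<dots> = g y"
    using periodic Suc by simp
  finally show ?case .
qed

lemma prod_atLeast1_atMost_eq_lessThan_cyclic:
  fixes f :: "nat \<Rightarrow> 'a::comm_monoid_mult"
  assumes "f r = f 0"
  shows "(\<Prod>j\<in>{1..r}. f j) = (\<Prod>j<r. f j)"
proof (cases "r = 0")
  case False
  have "(\<Prod>j\<in>{1..r}. f j) = f r * (\<Prod>j\<in>{1..<r}. f j)"
    using False by (simp add: atLeastLessThanSuc_atLeastAtMost[symmetric] prod.atLeastLessThan_Suc
        mult.commute)
  moreover have "(\<Prod>j<r. f j) = f 0 * (\<Prod>j\<in>{1..<r}. f j)"
    using False by (simp add: lessThan_atLeast0 prod.atLeast_Suc_lessThan)
  ultimately show ?thesis
    using assms by simp
qed simp

lemma prod_orbit_reflect: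
  fixes g :: "real \<Rightarrow> 'a::comm_monoid_mult"
  assumes even: "\<And>y. g (- y) = g y"
    and periodic: "\<And>y. g (y + T) = g y"
    and full_turn: "real r * c = real k * T"
  shows "(\<Prod>j<r. g (- y + real j * c)) = (\<Prod>j<r. g (y + real j * c))"
proof -
  have "(\<Prod>j<r. g (- y + real j * c)) = (\<Prod>j<r. g (y + real (r - j) * c))"
  proof (rule prod.cong)
    fix j assume "j \<in> {..<r}"
    have "g (- y + real j * c) = g (y - real j * c)"
      using even[of "y - real j * c"] by simp
    also have "\<dots> = g ((y - real j * c) + real k * T)"
      by (rule periodic_add_nat_mult[of g T, OF periodic, symmetric])
    also have "(y - real j * c) + real k * T = y + real (r - j) * c"
      using \<open>j \<in> {..<r}\<close> full_turn by (simp add: of_nat_diff algebra_simps)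
    finally show "g (- y + real j * c) = g (y + real (r - j) * c)" .
  qed simp
  also have "\<dots> = (\<Prod>j\<in>{1..r}. g (y + real j * c))"
    by (rule prod.reindex_bij_witness[where i="\<lambda>j. r - j" and j="\<lambda>j. r - j"]) auto
  also have "\<dots> = (\<Prod>j<r. g (y + real j * c))"
    by (rule prod_atLeast1_atMost_eq_lessThan_cyclic)
       (simp add: full_turn periodic_add_nat_mult[of g T, OF periodic])
  finally show ?thesis .
qed

lemma prod_window_reverse:
  fixes F :: "real \<Rightarrow> 'a::comm_monoid_mult"
  shows "(\<Prod>k\<in>{1..q}. F (x - (real q - 1) * \<mu> + (real k - 1) * \<mu>))
       = (\<Prod>i<q. F (x - real i * \<mu>))"
  by (rule prod.reindex_bij_witness[where i="\<lambda>i. q - i" and j="\<lambda>k. q - k"])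
     (auto simp: of_nat_diff algebra_simps)

lemma prod_window_reflect:
  fixes F :: "real \<Rightarrow> 'a::comm_monoid_mult"
  assumes even: "\<And>y. F (- y) = F y"
  shows "(\<Prod>k\<in>{1..q}. F (- x + (real k - 1) * \<mu>)) = (\<Prod>i<q. F (x - real i * \<mu>))"
proof -
  have "(\<Prod>k\<in>{1..q}. F (- x + (real k - 1) * \<mu>)) = (\<Prod>i<q. F (- (x - real i * \<mu>)))"
    by (rule prod.reindex_bij_witness[where i="\<lambda>i. i + 1" and j="\<lambda>k. k - 1"])
       (auto simp: of_nat_diff algebra_simps)
  then show ?thesis
    by (simp only: even)
qed

theorem corollaryA6:
  fixes g :: "real \<Rightarrow> real" and m n l :: nat and x :: real
  assumes even: "\<And>y. g (- y) = g y"
    and periodic: "\<And>y. g (y + pi) = g y"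
    and m_pos: "m > 0" and n_pos: "n > 0"
    and l_range: "l < gcd m n"
  shows "let p = gcd m n; r = n div p; \<mu> = pi / real n;
             h = (\<lambda>y. \<Prod>j<r. g (y + real j * real m * \<mu>));
             lam = (\<lambda>y. \<Prod>k\<in>{1..p - l}. h (y + (real k - 1) * \<mu>));
             \<delta> = (real p - real l - 1) * \<mu>
         in lam (x - \<delta>) = (\<Prod>i<p - l. h (x - real i * \<mu>))
            \<and> lam (x - \<delta>) = lam (- x)"
proof -
  define p where "p = gcd m n"
  define \<mu> where "\<mu> = pi / real n"
  define h where "h = (\<lambda>y. \<Prod>j<n div p. g (y + real j * (real m * \<mu>)))"
  have "real (n div p) * (real m * \<mu>) = real (m div p) * pi"
    using n_pos by (simp add: p_def \<mu>_def real_of_nat_div field_simps)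
  then have h_even: "h (- y) = h y" for y
    unfolding h_def by (rule prod_orbit_reflect[OF even periodic])
  have \<delta>: "real p - real l - 1 = real (p - l) - 1"
    using l_range by (simp add: p_def of_nat_diff)
  have "(\<Prod>k\<in>{1..p - l}. h (x - (real (p - l) - 1) * \<mu> + (real k - 1) * \<mu>))
      = (\<Prod>i<p - l. h (x - real i * \<mu>))"
    by (rule prod_window_reverse)
  moreover have "(\<Prod>k\<in>{1..p - l}. h (- x + (real k - 1) * \<mu>)) = (\<Prod>i<p - l. h (x - real i * \<mu>))"
    by (rule prod_window_reflect[of h, OF h_even])
  ultimately show ?thesis
    unfolding Let_def p_def[symmetric] \<mu>_def[symmetric] \<delta>
    by (simp add: h_def mult.assoc)
qed

end
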